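(* Let $T$ be the regular rooted tree of valence $p\geq 2$ (geometric realization, usual topology), equipped with the embedded wire diffeology $\mathcal{D}_T$. Then every $g\in\operatorname{Aut}T$, viewed as a map $g:T\to T$, is smooth with respect to $\mathcal{D}_T$.
   Context: Fix a finite alphabet $A$ with $|A|=p\geq 2$. The vertices of $T$ are the finite words over $A$ (the root is the empty word); the length $|u|$ of a word is its level; two vertices are joined by an edge iff they have the form $a_1\dots a_n$ and $a_1\dots a_na_{n+1}$. As a topological space, $T$ is the 1-dimensional CW complex obtained by realizing each edge as a copy of $[0,1]$, with its usual topology. $\operatorname{Aut}T$ is the group of bijections of the vertex set fixing the root and preserving adjacency; each such automorphism is regarded as a homeomorphism of the geometric realization, mapping each edge affinely onto its image edge. A diffeology on a set $X$ is a collection of maps $U\to X$ ("plots"), $U$ ranging over open subsets of all $\mathbb{R}^n$, containing all constant maps, closed under precomposition with smooth maps, and satisfying the sheaf condition (a map that is locally a plot is a plot). The diffeology generated by a set $\mathcal{A}$ of maps is the smallest diffeology containing $\mathcal{A}$. The embedded wire diffeology $\mathcal{D}_T$ is the diffeology on $T$ generated by all maps $\gamma:\mathbb{R}\to T$ that are injective, continuous, and homeomorphisms onto their images. A map $f:X\to Y$ of diffeological spaces is smooth if $f\circ P$ is a plot of $Y$ for every plot $P$ of $X$. *)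

theory Defs
  imports "HOL-Analysis.Analysis"
begin

text \<open>Vertices are the words over the alphabet (type 'a, finite). A point of the
geometric realization is encoded as a pair (w, s): the root is ([], 0); for w a
nonempty word and 0 <= s < 1, (w, s) is the point on the edge joining w to its
parent (butlast w) at distance s from the vertex w.\<close>

definition Tcarrier :: "('a list \<times> real) set" where
  "Tcarrier = {(w, s). (w = [] \<and> s = 0) \<or> (w \<noteq> [] \<and> 0 \<le> s \<and> s < 1)}"

text \<open>Characteristic map of the closed edge with lower endpoint w (w nonempty):
parameter t in [0,1] is the distance from w; t = 1 is the parent vertex.\<close>
definition edgemap :: "'a list \<Rightarrow> real \<Rightarrow> 'a list \<times> real" where
  "edgemap w t = (if t = 1 then (butlast w, 0) else (w, t))"

text \<open>CW (weak) topology: U is open iff its preimage under every closed-edge map is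
open in [0,1].\<close>
definition Ttop :: "('a list \<times> real) topology" where
  "Ttop = topology (\<lambda>U. U \<subseteq> Tcarrier \<and>
      (\<forall>w. w \<noteq> [] \<longrightarrow> openin (top_of_set {0..1}) {t \<in> {0..1}. edgemap w t \<in> U}))"

lemma edge_preimage_Int:
  "{t \<in> {0..1::real}. edgemap w t \<in> S \<inter> T} = {t \<in> {0..1}. edgemap w t \<in> S} \<inter> {t \<in> {0..1}. edgemap w t \<in> T}"
  by auto

lemma edge_preimage_Union:
  "{t \<in> {0..1::real}. edgemap w t \<in> \<Union>K} = \<Union>((\<lambda>S. {t \<in> {0..1}. edgemap w t \<in> S}) ` K)"
  by auto

lemma istopology_Ttop:
  "istopology (\<lambda>U. U \<subseteq> Tcarrier \<and>
      (\<forall>w. w \<noteq> [] \<longrightarrow> openin (top_of_set {0..1}) {t \<in> {0..1}. edgemap w t \<in> U}))"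
  unfolding istopology_def edge_preimage_Int edge_preimage_Union
  by (auto intro!: openin_Int openin_Union)

definition tree_adj :: "'a list \<Rightarrow> 'a list \<Rightarrow> bool" where
  "tree_adj u v \<longleftrightarrow> (\<exists>a. v = u @ [a]) \<or> (\<exists>a. u = v @ [a])"

definition AutT :: "('a list \<Rightarrow> 'a list) set" where
  "AutT = {g. bij g \<and> g [] = [] \<and> (\<forall>u v. tree_adj u v \<longleftrightarrow> tree_adj (g u) (g v))}"

text \<open>Geometric realization of an automorphism: it maps the edge below w affinely
onto the edge below g w (levels are preserved, so orientations match).\<close>
definition realize :: "('a list \<Rightarrow> 'a list) \<Rightarrow> 'a list \<times> real \<Rightarrow> 'a list \<times> real" where
  "realize g p = (g (fst p), snd p)"

text \<open>R^n is encoded as the functions nat => real vanishing from index n on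
(with the product topology, which is the Euclidean one on this subspace).\<close>
definition Rn :: "nat \<Rightarrow> (nat \<Rightarrow> real) set" where
  "Rn n = {x. \<forall>i\<ge>n. x i = 0}"

definition open_Rn :: "nat \<Rightarrow> (nat \<Rightarrow> real) set \<Rightarrow> bool" where
  "open_Rn n U \<longleftrightarrow> openin (top_of_set (Rn n)) U"

definition partial_der :: "nat \<Rightarrow> ((nat \<Rightarrow> real) \<Rightarrow> real) \<Rightarrow> (nat \<Rightarrow> real) \<Rightarrow> real" where
  "partial_der i h x = deriv (\<lambda>t. h (x(i := x i + t))) 0"

fun Ck_on :: "nat \<Rightarrow> nat \<Rightarrow> (nat \<Rightarrow> real) set \<Rightarrow> ((nat \<Rightarrow> real) \<Rightarrow> real) \<Rightarrow> bool" where
  "Ck_on 0 n U h = continuous_on U h"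
| "Ck_on (Suc k) n U h = (continuous_on U h \<and>
     (\<forall>i<n. \<forall>x\<in>U. (\<lambda>t. h (x(i := x i + t))) differentiable (at 0)) \<and>
     (\<forall>i<n. Ck_on k n U (partial_der i h)))"

definition smooth_real :: "nat \<Rightarrow> (nat \<Rightarrow> real) set \<Rightarrow> ((nat \<Rightarrow> real) \<Rightarrow> real) \<Rightarrow> bool" where
  "smooth_real n U h \<longleftrightarrow> (\<forall>k. Ck_on k n U h)"

definition smooth_between ::
  "nat \<Rightarrow> (nat \<Rightarrow> real) set \<Rightarrow> nat \<Rightarrow> (nat \<Rightarrow> real) set \<Rightarrow> ((nat \<Rightarrow> real) \<Rightarrow> (nat \<Rightarrow> real)) \<Rightarrow> bool" where
  "smooth_between m U n V F \<longleftrightarrow> F ` U \<subseteq> V \<and> V \<subseteq> Rn n \<and> (\<forall>j<n. smooth_real m U (\<lambda>x. F x j))"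

text \<open>A parametrization is a triple (n, U, P): U open in R^n, P : U -> X.
A diffeology on the set S is a set of parametrizations.\<close>
type_synonym 'x param = "nat \<times> (nat \<Rightarrow> real) set \<times> ((nat \<Rightarrow> real) \<Rightarrow> 'x)"

definition is_diffeology :: "'x set \<Rightarrow> 'x param set \<Rightarrow> bool" where
  "is_diffeology S D \<longleftrightarrow>
     (\<forall>n U P. (n, U, P) \<in> D \<longrightarrow> open_Rn n U \<and> P ` U \<subseteq> S)
   \<and> (\<forall>n U P Q. (n, U, P) \<in> D \<and> (\<forall>x\<in>U. P x = Q x) \<longrightarrow> (n, U, Q) \<in> D)
   \<and> (\<forall>n U c. open_Rn n U \<and> c \<in> S \<longrightarrow> (n, U, \<lambda>_. c) \<in> D)
   \<and> (\<forall>n U P m V F. (n, U, P) \<in> D \<and> open_Rn m V \<and> smooth_between m V n U F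
        \<longrightarrow> (m, V, P \<circ> F) \<in> D)
   \<and> (\<forall>n U P. open_Rn n U \<and> P ` U \<subseteq> S \<and>
        (\<forall>x\<in>U. \<exists>W. open_Rn n W \<and> x \<in> W \<and> W \<subseteq> U \<and> (n, W, P) \<in> D)
        \<longrightarrow> (n, U, P) \<in> D)"

definition generated_diffeology :: "'x set \<Rightarrow> 'x param set \<Rightarrow> 'x param set" where
  "generated_diffeology S G = \<Inter>{D. is_diffeology S D \<and> G \<subseteq> D}"

definition diff_smooth :: "'x param set \<Rightarrow> 'y param set \<Rightarrow> ('x \<Rightarrow> 'y) \<Rightarrow> bool" where
  "diff_smooth DX DY f \<longleftrightarrow> (\<forall>n U P. (n, U, P) \<in> DX \<longrightarrow> (n, U, f \<circ> P) \<in> DY)"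

text \<open>Embedded wire diffeology: generated by the embeddings gamma : R -> T,
seen as 1-parameter plots on R^1.\<close>
definition wire_generators :: "('a list \<times> real) param set" where
  "wire_generators = {(1, Rn 1, \<lambda>x. \<gamma> (x 0)) | \<gamma>. embedding_map euclideanreal Ttop \<gamma>}"

definition DT :: "('a list \<times> real) param set" where
  "DT = generated_diffeology Tcarrier wire_generators"

end

theory Submission
  imports Defs
begin

text \<open>The generated diffeology is the smallest diffeology containing the wires, so a map
is smooth out of it once the pullback of the target diffeology, which is again a
diffeology, contains every wire. The realization of an automorphism maps each edge affinely
onto an edge, as does the realization of its inverse, so it is a homeomorphism of T in the
CW topology and therefore carries embedded wires to embedded wires.\<close>

lemma is_diffeology_domain:
  "is_diffeology S D \<Longrightarrow> (n, U, P) \<in> D \<Longrightarrow> open_Rn n U \<and> P ` U \<subseteq> S"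
  unfolding is_diffeology_def by metis

lemma is_diffeology_cong:
  "is_diffeology S D \<Longrightarrow> (n, U, P) \<in> D \<Longrightarrow> \<forall>x\<in>U. P x = Q x \<Longrightarrow> (n, U, Q) \<in> D"
  unfolding is_diffeology_def by blast

lemma is_diffeology_const:
  "is_diffeology S D \<Longrightarrow> open_Rn n U \<Longrightarrow> c \<in> S \<Longrightarrow> (n, U, \<lambda>_. c) \<in> D"
  unfolding is_diffeology_def by blast

lemma is_diffeology_comp:
  "is_diffeology S D \<Longrightarrow> (n, U, P) \<in> D \<Longrightarrow> open_Rn m V \<Longrightarrow> smooth_between m V n U F
    \<Longrightarrow> (m, V, P \<circ> F) \<in> D"
  unfolding is_diffeology_def by metis

lemma is_diffeology_sheaf:
  "is_diffeology S D \<Longrightarrow> open_Rn n U \<Longrightarrow> P ` U \<subseteq> S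
    \<Longrightarrow> \<forall>x\<in>U. \<exists>W. open_Rn n W \<and> x \<in> W \<and> W \<subseteq> U \<and> (n, W, P) \<in> D \<Longrightarrow> (n, U, P) \<in> D"
  unfolding is_diffeology_def by blast

lemma is_diffeology_Inter:
  assumes "D0 \<in> \<D>" and diff: "\<And>D. D \<in> \<D> \<Longrightarrow> is_diffeology S D"
  shows "is_diffeology S (\<Inter>\<D>)"
  unfolding is_diffeology_def
proof (intro conjI; intro allI impI)
  fix n U P assume "(n, U, P) \<in> \<Inter>\<D>"
  then show "open_Rn n U \<and> P ` U \<subseteq> S"
    using is_diffeology_domain[OF diff[OF assms(1)]] assms(1) by blast
next
  fix n U P Q assume "(n, U, P) \<in> \<Inter>\<D> \<and> (\<forall>x\<in>U. P x = Q x)"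
  then show "(n, U, Q) \<in> \<Inter>\<D>" using is_diffeology_cong[OF diff] by blast
next
  fix n U c assume "open_Rn n U \<and> c \<in> S"
  then show "(n, U, \<lambda>_. c) \<in> \<Inter>\<D>" using is_diffeology_const[OF diff] by blast
next
  fix n U P m V F assume "(n, U, P) \<in> \<Inter>\<D> \<and> open_Rn m V \<and> smooth_between m V n U F"
  then show "(m, V, P \<circ> F) \<in> \<Inter>\<D>" using is_diffeology_comp[OF diff] by blast
next
  fix n U P
  assume h: "open_Rn n U \<and> P ` U \<subseteq> S \<and> (\<forall>x\<in>U. \<exists>W. open_Rn n W \<and> x \<in> W \<and> W \<subseteq> U \<and> (n, W, P) \<in> \<Inter>\<D>)"
  then show "(n, U, P) \<in> \<Inter>\<D>"
  proof (intro InterI)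
    fix D assume D: "D \<in> \<D>"
    with h have "\<forall>x\<in>U. \<exists>W. open_Rn n W \<and> x \<in> W \<and> W \<subseteq> U \<and> (n, W, P) \<in> D"
      by blast
    then show "(n, U, P) \<in> D" using is_diffeology_sheaf[OF diff[OF D]] h by blast
  qed
qed

lemma generated_diffeology_superset: "G \<subseteq> generated_diffeology S G"
  unfolding generated_diffeology_def by blast

lemma is_diffeology_coarse:
  "is_diffeology S {(n, U, P). open_Rn n U \<and> P ` U \<subseteq> S}"
  unfolding is_diffeology_def smooth_between_def
  by (intro conjI allI impI; clarsimp; blast)

lemma is_diffeology_generated:
  assumes "\<And>n U P. (n, U, P) \<in> G \<Longrightarrow> open_Rn n U \<and> P ` U \<subseteq> S"
  shows "is_diffeology S (generated_diffeology S G)"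
  unfolding generated_diffeology_def
proof (rule is_diffeology_Inter)
  show "{(n, U, P). open_Rn n U \<and> P ` U \<subseteq> S} \<in> {D. is_diffeology S D \<and> G \<subseteq> D}"
  proof (intro CollectI conjI is_diffeology_coarse)
    show "G \<subseteq> {(n, U, P). open_Rn n U \<and> P ` U \<subseteq> S}"
    proof
      fix x assume "x \<in> G"
      then show "x \<in> {(n, U, P). open_Rn n U \<and> P ` U \<subseteq> S}"
        using assms by (cases x) auto
    qed
  qed
next
  show "\<And>D. D \<in> {D. is_diffeology S D \<and> G \<subseteq> D} \<Longrightarrow> is_diffeology S D" by blast
qed

definition pullback_diffeology :: "'x set \<Rightarrow> ('x \<Rightarrow> 'y) \<Rightarrow> 'y param set \<Rightarrow> 'x param set" where
  "pullback_diffeology S f DY = {(n, U, P). open_Rn n U \<and> P ` U \<subseteq> S \<and> (n, U, f \<circ> P) \<in> DY}"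

lemma mem_pullback_diffeology:
  "(n, U, P) \<in> pullback_diffeology S f DY \<longleftrightarrow> open_Rn n U \<and> P ` U \<subseteq> S \<and> (n, U, f \<circ> P) \<in> DY"
  by (simp add: pullback_diffeology_def)

lemma is_diffeology_pullback:
  assumes DY: "is_diffeology S' DY" and f: "f ` S \<subseteq> S'"
  shows "is_diffeology S (pullback_diffeology S f DY)"
  unfolding is_diffeology_def mem_pullback_diffeology
proof (intro conjI; intro allI impI)
  fix n U P assume "open_Rn n U \<and> P ` U \<subseteq> S \<and> (n, U, f \<circ> P) \<in> DY"
  then show "open_Rn n U \<and> P ` U \<subseteq> S" by blast
next
  fix n U P Q
  assume "(open_Rn n U \<and> P ` U \<subseteq> S \<and> (n, U, f \<circ> P) \<in> DY) \<and> (\<forall>x\<in>U. P x = Q x)"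
  then show "open_Rn n U \<and> Q ` U \<subseteq> S \<and> (n, U, f \<circ> Q) \<in> DY"
    using is_diffeology_cong[OF DY, of n U "f \<circ> P" "f \<circ> Q"] by auto
next
  fix n U c assume "open_Rn n U \<and> c \<in> S"
  then show "open_Rn n U \<and> (\<lambda>_. c) ` U \<subseteq> S \<and> (n, U, f \<circ> (\<lambda>_. c)) \<in> DY"
    using is_diffeology_const[OF DY, of n U "f c"] f by (auto simp: comp_def)
next
  fix n U P m V F
  assume "(open_Rn n U \<and> P ` U \<subseteq> S \<and> (n, U, f \<circ> P) \<in> DY) \<and> open_Rn m V \<and> smooth_between m V n U F"
  then show "open_Rn m V \<and> (P \<circ> F) ` V \<subseteq> S \<and> (m, V, f \<circ> (P \<circ> F)) \<in> DY"
    using is_diffeology_comp[OF DY, of n U "f \<circ> P" m V F] unfolding smooth_between_def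
    by (auto simp: comp_assoc)
next
  fix n U P
  assume h: "open_Rn n U \<and> P ` U \<subseteq> S \<and>
    (\<forall>x\<in>U. \<exists>W. open_Rn n W \<and> x \<in> W \<and> W \<subseteq> U \<and> open_Rn n W \<and> P ` W \<subseteq> S \<and> (n, W, f \<circ> P) \<in> DY)"
  have "(f \<circ> P) ` U \<subseteq> S'" using h f by (auto simp: image_subset_iff)
  then show "open_Rn n U \<and> P ` U \<subseteq> S \<and> (n, U, f \<circ> P) \<in> DY"
    using is_diffeology_sheaf[OF DY, of n U "f \<circ> P"] h by blast
qed

lemma diff_smooth_generated:
  assumes DY: "is_diffeology S' DY" and f: "f ` S \<subseteq> S'"
    and G: "\<And>n U P. (n, U, P) \<in> G \<Longrightarrow> open_Rn n U \<and> P ` U \<subseteq> S \<and> (n, U, f \<circ> P) \<in> DY"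
  shows "diff_smooth (generated_diffeology S G) DY f"
  unfolding diff_smooth_def
proof (intro allI impI)
  fix n U P assume P: "(n, U, P) \<in> generated_diffeology S G"
  have "G \<subseteq> pullback_diffeology S f DY"
    using G mem_pullback_diffeology by fast
  then have "pullback_diffeology S f DY \<in> {D. is_diffeology S D \<and> G \<subseteq> D}"
    using is_diffeology_pullback[OF DY f] by blast
  then have "generated_diffeology S G \<subseteq> pullback_diffeology S f DY"
    unfolding generated_diffeology_def by (rule Inter_lower)
  then show "(n, U, f \<circ> P) \<in> DY"
    using P mem_pullback_diffeology by fast
qed

lemma tree_adj_cases:
  "tree_adj u v \<Longrightarrow> (length v = Suc (length u) \<and> u = butlast v) \<or> (length u = Suc (length v) \<and> v = butlast u)"
  unfolding tree_adj_def by auto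

lemma AutT_length_butlast:
  assumes g: "g \<in> AutT"
  shows "length (g w) = length w \<and> g (butlast w) = butlast (g w)"
proof (induction w rule: rev_induct)
  case Nil
  then show ?case using g by (simp add: AutT_def)
next
  case (snoc a u)
  have "tree_adj u (u @ [a])" unfolding tree_adj_def by blast
  then have "tree_adj (g u) (g (u @ [a]))" using g unfolding AutT_def by blast
  then consider
      (child) "length (g (u @ [a])) = Suc (length (g u))" "g u = butlast (g (u @ [a]))"
    | (parent) "length (g u) = Suc (length (g (u @ [a])))" "g (u @ [a]) = butlast (g u)"
    using tree_adj_cases by blast
  then show ?case
  proof cases
    case child
    then show ?thesis using snoc.IH by simp
  next
    case parent
    then have "g (u @ [a]) = g (butlast u)" using snoc.IH by simp
    then have "u @ [a] = butlast u" using g by (simp add: AutT_def bij_is_inj inj_eq)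
    then have "Suc (length u) = length u - 1" by (metis length_append_singleton length_butlast)
    then show ?thesis by simp
  qed
qed

lemma AutT_length: "g \<in> AutT \<Longrightarrow> length (g w) = length w"
  using AutT_length_butlast by blast

lemma AutT_butlast: "g \<in> AutT \<Longrightarrow> g (butlast w) = butlast (g w)"
  using AutT_length_butlast by blast

lemma AutT_inv: assumes g: "g \<in> AutT" shows "inv g \<in> AutT"
proof -
  have b: "bij g" and g0: "g [] = []" and adj: "\<And>u v. tree_adj u v \<longleftrightarrow> tree_adj (g u) (g v)"
    using g by (auto simp: AutT_def)
  have "inv g [] = []" using b g0 by (metis bij_is_inj inv_f_f)
  moreover have "tree_adj u v \<longleftrightarrow> tree_adj (inv g u) (inv g v)" for u v
    using adj[of "inv g u" "inv g v"] b by (simp add: bij_is_surj surj_f_inv_f)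
  ultimately show ?thesis
    using b by (simp add: AutT_def bij_imp_bij_inv)
qed

lemma openin_Ttop: "openin Ttop U \<longleftrightarrow> U \<subseteq> Tcarrier \<and>
      (\<forall>w. w \<noteq> [] \<longrightarrow> openin (top_of_set {0..1}) {t \<in> {0..1}. edgemap w t \<in> U})"
  unfolding Ttop_def topology_inverse'[OF istopology_Ttop] ..

lemma edgemap_in_Tcarrier: "w \<noteq> [] \<Longrightarrow> t \<in> {0..1} \<Longrightarrow> edgemap w t \<in> Tcarrier"
  unfolding edgemap_def Tcarrier_def by auto

lemma topspace_Ttop: "topspace (Ttop :: ('a list \<times> real) topology) = Tcarrier"
proof -
  have "openin Ttop (Tcarrier :: ('a list \<times> real) set)"
    unfolding openin_Ttop
  proof (intro conjI subset_refl allI impI)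
    fix w :: "'a list" assume "w \<noteq> []"
    then have "{t \<in> {0..1}. edgemap w t \<in> Tcarrier} = {0..1::real}"
      using edgemap_in_Tcarrier by blast
    then show "openin (top_of_set {0..1}) {t \<in> {0..1}. edgemap w t \<in> Tcarrier}"
      by (metis openin_subtopology_self)
  qed
  then have "Tcarrier \<subseteq> topspace (Ttop :: ('a list \<times> real) topology)"
    by (rule openin_subset)
  moreover have "topspace (Ttop :: ('a list \<times> real) topology) \<subseteq> Tcarrier"
    using openin_topspace[of Ttop] unfolding openin_Ttop by (rule conjunct1)
  ultimately show ?thesis by (rule subset_antisym[rotated])
qed

lemma realize_in_Tcarrier: "g \<in> AutT \<Longrightarrow> p \<in> Tcarrier \<Longrightarrow> realize g p \<in> Tcarrier"
  using AutT_length[of g "fst p"] unfolding realize_def Tcarrier_def by auto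

lemma realize_edgemap: "g \<in> AutT \<Longrightarrow> realize g (edgemap w t) = edgemap (g w) t"
  unfolding realize_def edgemap_def using AutT_butlast[of g w] by auto

lemma continuous_map_realize:
  assumes g: "g \<in> AutT"
  shows "continuous_map Ttop Ttop (realize g)"
  unfolding continuous_map topspace_Ttop
proof (intro conjI allI impI)
  show "realize g ` Tcarrier \<subseteq> Tcarrier" using realize_in_Tcarrier[OF g] by auto
  fix U :: "('a list \<times> real) set" assume U: "openin Ttop U"
  show "openin Ttop {x \<in> Tcarrier. realize g x \<in> U}"
    unfolding openin_Ttop
  proof (intro conjI allI impI)
    fix w :: "'a list" assume w: "w \<noteq> []"
    have "{t \<in> {0..1}. edgemap w t \<in> {x \<in> Tcarrier. realize g x \<in> U}}
        = {t \<in> {0..1}. edgemap (g w) t \<in> U}"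
      using edgemap_in_Tcarrier[OF w] realize_edgemap[OF g] by auto
    moreover have "g w \<noteq> []" using AutT_length[OF g, of w] w by auto
    ultimately show "openin (top_of_set {0..1}) {t \<in> {0..1}. edgemap w t \<in> {x \<in> Tcarrier. realize g x \<in> U}}"
      using U unfolding openin_Ttop by simp
  qed auto
qed

lemma homeomorphic_map_realize:
  assumes g: "g \<in> AutT"
  shows "homeomorphic_map Ttop Ttop (realize g)"
proof -
  have "bij g" using g by (simp add: AutT_def)
  then have "homeomorphic_maps Ttop Ttop (realize g) (realize (inv g))"
    unfolding homeomorphic_maps_def
    using continuous_map_realize[OF g] continuous_map_realize[OF AutT_inv[OF g]]
    by (simp add: realize_def bij_is_inj bij_is_surj surj_f_inv_f)
  then show ?thesis using homeomorphic_map_maps by blast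
qed

lemma embedding_map_into_Tcarrier:
  "embedding_map X Ttop \<gamma> \<Longrightarrow> x \<in> topspace X \<Longrightarrow> \<gamma> x \<in> Tcarrier"
  unfolding embedding_map_def
  using homeomorphic_imp_continuous_map continuous_map_image_subset_topspace
  by (fastforce simp: topspace_Ttop)

lemma wire_generators_in_Tcarrier:
  "(n, U, P) \<in> wire_generators \<Longrightarrow> open_Rn n U \<and> P ` U \<subseteq> Tcarrier"
  unfolding wire_generators_def open_Rn_def using embedding_map_into_Tcarrier by fastforce

lemma realize_wire_generator:
  assumes g: "g \<in> AutT" and P: "(n, U, P) \<in> wire_generators"
  shows "(n, U, realize g \<circ> P) \<in> wire_generators"
proof -
  obtain \<gamma> where nUP: "(n, U, P) = (1, Rn 1, \<lambda>x. \<gamma> (x 0))"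
    and \<gamma>: "embedding_map euclideanreal Ttop \<gamma>"
    using P unfolding wire_generators_def by blast
  have "embedding_map Ttop Ttop (realize g)"
    using homeomorphic_map_realize[OF g] surjective_embedding_map by blast
  then have "embedding_map euclideanreal Ttop (realize g \<circ> \<gamma>)"
    using \<gamma> embedding_map_compose by blast
  then show ?thesis
    using nUP unfolding wire_generators_def by (auto simp: comp_def)
qed

lemma is_diffeology_DT: "is_diffeology Tcarrier DT"
  unfolding DT_def using wire_generators_in_Tcarrier by (rule is_diffeology_generated)

theorem mainTheorem2:
  fixes g :: "'a::finite list \<Rightarrow> 'a list"
  assumes "CARD('a) \<ge> 2"
    and "g \<in> AutT"
  shows "diff_smooth (DT :: ('a list \<times> real) param set) DT (realize g)"
proof -
  have "diff_smooth (generated_diffeology Tcarrier wire_generators) DT (realize g)"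
  proof (rule diff_smooth_generated)
    show "is_diffeology Tcarrier (DT :: ('a list \<times> real) param set)"
      by (rule is_diffeology_DT)
    show "realize g ` Tcarrier \<subseteq> Tcarrier"
      using realize_in_Tcarrier[OF assms(2)] by blast
    fix n U P assume "(n, U, P) \<in> (wire_generators :: ('a list \<times> real) param set)"
    then show "open_Rn n U \<and> P ` U \<subseteq> Tcarrier \<and> (n, U, realize g \<circ> P) \<in> DT"
      using wire_generators_in_Tcarrier realize_wire_generator[OF assms(2)]
        generated_diffeology_superset
      unfolding DT_def by blast
  qed
  then show ?thesis by (simp only: DT_def[symmetric])
qed

end
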